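(* Let $\varepsilon>0$ be sufficiently small, $0<\theta<\pi/2$, $\tilde\eta>0$, and let $\Delta_\varepsilon=\{x\in\mathbb C:|x-\rho|<\varepsilon,\ |\arg(x-\rho)|>\theta\}$ and $\Xi_k=\{u\in\mathbb C:|u|\le1,\ k|u-1|\le\tilde\eta\}$. Then there is $0<L<1$ such that, for $u\in\Xi_k$ and $x\in\Delta_\varepsilon$, $$\sum_{i\ge2}\gamma_k(x^i,u^i)=O(L^k).$$
   Context: Let $y(x)=\sum_{n\ge1}y_nx^n$, $y_n$ the number of unlabelled rooted trees with $n$ vertices; it satisfies $y(x)=x\exp(\sum_{i\ge1}y(x^i)/i)$, has radius of convergence $\rho\in(0,1)$, $y(\rho)=1$. Define $y_0(x,u)=uy(x)$, $y_{k+1}(x,u)=x\exp\left(\sum_{i\ge1}y_k(x^i,u^i)/i\right)$, and $\gamma_k(x,u)=\frac{\partial}{\partial u}y_k(x,u)$. *)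

theory Defs
  imports "HOL-Analysis.Analysis" "HOL-Library.Multiset"
begin

text \<open>Unlabelled rooted trees: a root together with a multiset of subtrees.
  Two trees are equal iff they are isomorphic as rooted trees.\<close>
datatype rtree = Node "rtree multiset"

primrec nverts :: "rtree \<Rightarrow> nat" where
  "nverts (Node ts) = Suc (sum_mset (image_mset nverts ts))"

definition ycount :: "nat \<Rightarrow> nat" where
  "ycount n = card {t. nverts t = n}"

definition ygf :: "complex \<Rightarrow> complex" where
  "ygf x = (\<Sum>n. of_nat (ycount n) * x ^ n)"

definition rho :: real where
  "rho = real_of_ereal (conv_radius (\<lambda>n. (of_nat (ycount n) :: complex)))"

primrec Yk :: "nat \<Rightarrow> complex \<Rightarrow> complex \<Rightarrow> complex" where
  "Yk 0 x u = u * ygf x"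
| "Yk (Suc k) x u = x * exp (\<Sum>i. Yk k (x ^ Suc i) (u ^ Suc i) / of_nat (Suc i))"

definition gammak :: "nat \<Rightarrow> complex \<Rightarrow> complex \<Rightarrow> complex" where
  "gammak k x u = deriv (\<lambda>v. Yk k x v) u"

definition Delta :: "real \<Rightarrow> real \<Rightarrow> complex set" where
  "Delta \<epsilon> \<theta> = {x. cmod (x - complex_of_real rho) < \<epsilon> \<and> \<bar>Arg (x - complex_of_real rho)\<bar> > \<theta>}"

definition Xi :: "real \<Rightarrow> nat \<Rightarrow> complex set" where
  "Xi \<eta> k = {u. cmod u \<le> 1 \<and> real k * cmod (u - 1) \<le> \<eta>}"

end

theory Submission
  imports Defs
begin

text \<open>Only the size of \<open>x\<close> matters. Splitting off the root gives \<open>W\<^sub>N\<^sub>+\<^sub>1 \<le> x \<Sum>\<^sub>k W\<^sub>N\<^sup>k\<close> for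
  the partial sums \<open>W\<^sub>N\<close> of \<open>y(x)\<close>, so \<open>|y(z)| \<le> 3/2 |z|\<close> for \<open>|z| \<le> 2/9\<close>; keeping only roots with
  at most two subtrees gives \<open>W\<^sub>2\<^sub>N\<^sub>+\<^sub>1 \<ge> x (1 + W\<^sub>N + W\<^sub>N\<^sup>2/2)\<close>, so the partial sums of \<open>y(5/12)\<close>
  are unbounded and \<open>\<rho> \<le> 5/12\<close>. Hence every \<open>x \<in> \<Delta>\<^sub>\<epsilon>\<close> has \<open>|x| \<le> 21/50\<close> and \<open>|x\<^sup>i| < 9/50\<close>
  for \<open>i \<ge> 2\<close>. In that region the recursion is a contraction: with \<open>s = |z| max 1 |v|\<close>,
  induction on \<open>k\<close> gives \<open>|y\<^sub>k(z,v)| \<le> 2s\<close> and \<open>|\<partial>\<^sub>v y\<^sub>k(z,v)| max 1 |v| \<le> 3/2 (18/41)\<^sup>k s\<close>,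
  since differentiating \<open>z exp (\<Sum>\<^sub>i y\<^sub>k(z\<^sup>i,v\<^sup>i)/i)\<close> in \<open>v\<close> multiplies by a series dominated by
  \<open>\<Sum>\<^sub>i s\<^sup>i = s/(1-s)\<close>. Summing these geometric bounds over \<open>i \<ge> 2\<close> gives the theorem with
  \<open>L = 18/41\<close>.\<close>

lemma nverts_pos: "0 < nverts t"
  by (cases t) auto

lemma nverts_Node_mset: "nverts (Node (mset xs)) = Suc (sum_list (map nverts xs))"
  by (simp add: sum_mset_sum_list flip: mset_map)

definition trees_upto :: "nat \<Rightarrow> rtree set" where
  "trees_upto N = {t. nverts t \<le> N}"

lemma trees_upto_0: "trees_upto 0 = {}"
  using nverts_pos by (auto simp: trees_upto_def)

lemma children_in_trees_upto:
  assumes "nverts (Node (mset xs)) \<le> Suc N"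
  shows "set xs \<subseteq> trees_upto N" and "length xs \<le> N"
proof -
  have total: "sum_list (map nverts xs) \<le> N"
    using assms unfolding nverts_Node_mset by simp
  show "set xs \<subseteq> trees_upto N"
    using total member_le_sum_list[of _ "map nverts xs"] by (fastforce simp: trees_upto_def)
  have "length xs \<le> sum_list (map nverts xs)"
    using sum_list_mono[of xs "\<lambda>_. 1" nverts] nverts_pos by (simp add: Suc_leI sum_list_triv)
  with total show "length xs \<le> N" by simp
qed

lemma trees_upto_Suc_subset:
  "trees_upto (Suc N) \<subseteq> (\<lambda>xs. Node (mset xs)) ` {xs. set xs \<subseteq> trees_upto N \<and> length xs \<le> N}"
proof
  fix t assume t: "t \<in> trees_upto (Suc N)"
  obtain xs where "t = Node (mset xs)"
    by (metis ex_mset rtree.exhaust)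
  with t children_in_trees_upto
  show "t \<in> (\<lambda>xs. Node (mset xs)) ` {xs. set xs \<subseteq> trees_upto N \<and> length xs \<le> N}"
    by (auto simp: trees_upto_def)
qed

lemma finite_trees_upto: "finite (trees_upto N)"
proof (induction N)
  case (Suc N)
  show ?case
    by (rule finite_subset[OF trees_upto_Suc_subset]) (intro finite_imageI finite_lists_length_le Suc.IH)
qed (simp add: trees_upto_0)

definition tree_sum :: "real \<Rightarrow> nat \<Rightarrow> real" where
  "tree_sum x N = (\<Sum>t\<in>trees_upto N. x ^ nverts t)"

lemma tree_sum_eq: "tree_sum x N = (\<Sum>n\<le>N. real (ycount n) * x ^ n)"
proof -
  have "tree_sum x N = (\<Sum>n\<le>N. \<Sum>t\<in>{t\<in>trees_upto N. nverts t = n}. x ^ nverts t)"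
    unfolding tree_sum_def
    by (rule sum.group[symmetric]) (auto simp: finite_trees_upto[unfolded trees_upto_def] trees_upto_def)
  also have "\<dots> = (\<Sum>n\<le>N. real (ycount n) * x ^ n)"
    by (intro sum.cong refl) (auto simp: ycount_def trees_upto_def intro!: arg_cong[where f = card])
  finally show ?thesis .
qed

lemma tree_sum_nonneg: "0 \<le> x \<Longrightarrow> 0 \<le> tree_sum x N"
  unfolding tree_sum_def by (intro sum_nonneg) auto

lemma sum_prod_list_lists_length:
  fixes f :: "'a \<Rightarrow> 'b::comm_semiring_1"
  assumes "finite A"
  shows "(\<Sum>xs\<in>{xs. set xs \<subseteq> A \<and> length xs = k}. prod_list (map f xs)) = sum f A ^ k"
proof (induction k)
  case 0
  have "{xs. set xs \<subseteq> A \<and> length xs = 0} = {[]}" by auto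
  then show ?case by simp
next
  case (Suc k)
  have inj: "inj_on (\<lambda>(xs, a). a # xs) ({xs. set xs \<subseteq> A \<and> length xs = k} \<times> A)"
    by (auto simp: inj_on_def)
  have "(\<Sum>xs\<in>{xs. set xs \<subseteq> A \<and> length xs = Suc k}. prod_list (map f xs))
      = (\<Sum>(xs, a)\<in>{xs. set xs \<subseteq> A \<and> length xs = k} \<times> A. f a * prod_list (map f xs))"
    unfolding lists_length_Suc_eq by (subst sum.reindex[OF inj]) (simp add: case_prod_unfold)
  also have "\<dots> = (\<Sum>xs\<in>{xs. set xs \<subseteq> A \<and> length xs = k}. \<Sum>a\<in>A. f a * prod_list (map f xs))"
    by (simp add: sum.cartesian_product)
  also have "\<dots> = (\<Sum>xs\<in>{xs. set xs \<subseteq> A \<and> length xs = k}. sum f A * prod_list (map f xs))"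
    by (simp add: sum_distrib_right)
  also have "\<dots> = sum f A * sum f A ^ k"
    by (simp add: sum_distrib_left[symmetric] Suc.IH)
  finally show ?case by simp
qed

lemma tree_sum_Suc_le:
  assumes x: "0 \<le> x"
  shows "tree_sum x (Suc N) \<le> x * (\<Sum>k\<le>N. tree_sum x N ^ k)"
proof -
  let ?T = "trees_upto N"
  let ?S = "{xs. set xs \<subseteq> ?T \<and> length xs \<le> N}"
  let ?w = "\<lambda>t. x ^ nverts t"
  have finS: "finite ?S" by (rule finite_lists_length_le[OF finite_trees_upto])
  have "x ^ sum_list (map nverts xs) = prod_list (map ?w xs)" for xs
    by (induction xs) (simp_all add: power_add)
  then have weight_Node: "?w (Node (mset xs)) = x * prod_list (map ?w xs)" for xs
    unfolding nverts_Node_mset by simp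
  have "tree_sum x (Suc N) \<le> sum ?w ((\<lambda>xs. Node (mset xs)) ` ?S)"
    unfolding tree_sum_def using x finS by (intro sum_mono2 trees_upto_Suc_subset) auto
  also have "\<dots> \<le> (\<Sum>xs\<in>?S. ?w (Node (mset xs)))"
    by (rule sum_image_le[OF finS, unfolded o_def]) (simp add: x)
  also have "\<dots> = (\<Sum>xs\<in>?S. x * prod_list (map ?w xs))"
    by (simp only: weight_Node)
  also have "?S = (\<Union>k\<le>N. {xs. set xs \<subseteq> ?T \<and> length xs = k})" by auto
  also have "(\<Sum>xs\<in>\<dots>. x * prod_list (map ?w xs))
      = (\<Sum>k\<le>N. \<Sum>xs\<in>{xs. set xs \<subseteq> ?T \<and> length xs = k}. x * prod_list (map ?w xs))"
    by (rule sum.UNION_disjoint) (auto intro: finite_lists_length_eq finite_trees_upto)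
  also have "\<dots> = x * (\<Sum>k\<le>N. tree_sum x N ^ k)"
    by (simp add: sum_distrib_left[symmetric] sum_prod_list_lists_length finite_trees_upto
        tree_sum_def)
  finally show ?thesis .
qed

lemma tree_sum_le:
  assumes x: "0 \<le> x" "x \<le> 2/9"
  shows "tree_sum x N \<le> 3/2 * x"
proof (induction N)
  case 0
  show ?case using x by (simp add: tree_sum_def trees_upto_0)
next
  case (Suc N)
  have q: "0 \<le> 3/2 * x" "3/2 * x < 1" using x by auto
  have geom: "(\<Sum>k\<le>N. (3/2 * x) ^ k) \<le> 3/2"
  proof -
    have "(\<Sum>k\<le>N. (3/2 * x) ^ k) = (1 - (3/2 * x) ^ Suc N) / (1 - 3/2 * x)"
      unfolding lessThan_Suc_atMost[symmetric] sum_gp_strict using q by simp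
    also have "\<dots> \<le> 1 / (1 - 3/2 * x)"
      using q by (intro divide_right_mono) auto
    also have "\<dots> \<le> 3/2"
      using x by (simp add: field_simps)
    finally show ?thesis .
  qed
  have "tree_sum x (Suc N) \<le> x * (\<Sum>k\<le>N. tree_sum x N ^ k)"
    by (rule tree_sum_Suc_le[OF x(1)])
  also have "\<dots> \<le> x * (\<Sum>k\<le>N. (3/2 * x) ^ k)"
    using Suc.IH tree_sum_nonneg[OF x(1)] x by (intro mult_left_mono sum_mono power_mono) auto
  also have "\<dots> \<le> x * (3/2)"
    by (rule mult_left_mono[OF geom x(1)])
  finally show ?case by simp
qed

lemma sum_comp_le_card_fibres:
  fixes g :: "'b \<Rightarrow> 'c::linordered_semidom"
  assumes "finite A" and "\<And>b. b \<in> f ` A \<Longrightarrow> card {a\<in>A. f a = b} \<le> m"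
    and "\<And>b. 0 \<le> g b"
  shows "(\<Sum>a\<in>A. g (f a)) \<le> of_nat m * (\<Sum>b\<in>f ` A. g b)"
proof -
  have "(\<Sum>a\<in>A. g (f a)) = (\<Sum>b\<in>f ` A. \<Sum>a\<in>{a\<in>A. f a = b}. g (f a))"
    by (rule sum.image_gen) (rule assms(1))
  also have "\<dots> = (\<Sum>b\<in>f ` A. of_nat (card {a\<in>A. f a = b}) * g b)"
    by (intro sum.cong refl) simp
  also have "\<dots> \<le> (\<Sum>b\<in>f ` A. of_nat m * g b)"
    using assms(2,3) by (intro sum_mono mult_right_mono) simp_all
  finally show ?thesis by (simp add: sum_distrib_left)
qed

lemma tree_sum_double_ge:
  assumes x: "0 \<le> x"
  shows "x * (1 + tree_sum x N + tree_sum x N ^ 2 / 2) \<le> tree_sum x (2 * N + 1)"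
proof -
  let ?T = "trees_upto N"
  let ?w = "\<lambda>t. x ^ nverts t"
  let ?pair = "\<lambda>(a, b). Node {#a, b#}"
  define A1 where "A1 = (\<lambda>a. Node {#a#}) ` ?T"
  define A2 where "A2 = ?pair ` (?T \<times> ?T)"
  have fin: "finite A1" "finite A2"
    by (simp_all add: A1_def A2_def finite_trees_upto)
  have sum_A1: "sum ?w A1 = x * tree_sum x N"
    unfolding A1_def tree_sum_def by (subst sum.reindex) (auto simp: inj_on_def sum_distrib_left)
  have "x * tree_sum x N ^ 2 = (\<Sum>p\<in>?T \<times> ?T. ?w (?pair p))"
    unfolding tree_sum_def power2_eq_square sum_product sum.cartesian_product
    by (subst sum_distrib_left) (rule sum.cong, auto simp: power_add)
  also have "\<dots> \<le> of_nat 2 * sum ?w A2"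
    unfolding A2_def
  proof (rule sum_comp_le_card_fibres)
    fix t assume "t \<in> ?pair ` (?T \<times> ?T)"
    then obtain a b where t: "t = Node {#a, b#}" by auto
    have "{p \<in> ?T \<times> ?T. ?pair p = t} \<subseteq> {(a, b), (b, a)}"
      using t by (auto simp: add_eq_conv_ex)
    then have "card {p \<in> ?T \<times> ?T. ?pair p = t} \<le> card {(a, b), (b, a)}"
      by (rule card_mono[rotated]) simp
    also have "\<dots> \<le> 2"
      by (rule card_insert_le_m1) simp_all
    finally show "card {p \<in> ?T \<times> ?T. ?pair p = t} \<le> 2" .
  qed (simp_all add: finite_trees_upto x)
  finally have sum_A2: "x * tree_sum x N ^ 2 / 2 \<le> sum ?w A2" by simp
  have disjoint: "Node {#} \<notin> A1" "(insert (Node {#}) A1) \<inter> A2 = {}"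
    by (auto simp: A1_def A2_def)
  have "sum ?w (insert (Node {#}) A1 \<union> A2) = sum ?w (insert (Node {#}) A1) + sum ?w A2"
    using fin disjoint(2) by (intro sum.union_disjoint) auto
  also have "\<dots> = x + sum ?w A1 + sum ?w A2"
    using fin disjoint(1) by simp
  finally have sum_split: "sum ?w (insert (Node {#}) A1 \<union> A2) = x + sum ?w A1 + sum ?w A2" .
  have "insert (Node {#}) A1 \<union> A2 \<subseteq> trees_upto (2 * N + 1)"
    by (auto simp: A1_def A2_def trees_upto_def)
  then have "sum ?w (insert (Node {#}) A1 \<union> A2) \<le> tree_sum x (2 * N + 1)"
    unfolding tree_sum_def using x by (intro sum_mono2 finite_trees_upto) auto
  then show ?thesis
    using sum_split sum_A1 sum_A2 by (simp add: algebra_simps)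
qed

lemma tree_sum_unbounded: "real k / 120 \<le> tree_sum (5/12) (2 ^ k - 1)"
proof (induction k)
  case 0
  then show ?case by (simp add: tree_sum_nonneg)
next
  case (Suc k)
  let ?w = "tree_sum (5/12) (2 ^ k - 1)"
  \<comment> \<open>the difference of the two sides is \<open>5/24 (?w - 7/5)\<^sup>2\<close>\<close>
  have "?w + 1/120 \<le> 5/12 * (1 + ?w + ?w ^ 2 / 2)"
    using zero_le_power2[of "?w - 7/5"] by (simp add: power2_eq_square algebra_simps)
  also have "\<dots> \<le> tree_sum (5/12) (2 * (2 ^ k - 1) + 1)"
    by (rule tree_sum_double_ge) simp
  also have "2 * (2 ^ k - 1) + 1 = (2::nat) ^ Suc k - 1"
    unfolding power_Suc using one_le_power[of "2::nat" k] by linarith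
  finally show ?case using Suc.IH by (simp add: field_simps)
qed

lemma conv_radius_ycount_le: "conv_radius (\<lambda>n. (of_nat (ycount n) :: complex)) \<le> ereal (5/12)"
proof (rule ccontr)
  assume "\<not> ?thesis"
  then have "ereal (norm (complex_of_real (5/12))) < conv_radius (\<lambda>n. (of_nat (ycount n) :: complex))"
    by simp
  from abs_summable_in_conv_radius[OF this]
  have s: "summable (\<lambda>n. real (ycount n) * (5/12) ^ n)"
    by (simp add: norm_mult norm_power)
  define Y where "Y = (\<Sum>n. real (ycount n) * (5/12::real) ^ n)"
  have bounded: "tree_sum (5/12) N \<le> Y" for N
    unfolding tree_sum_eq Y_def by (rule sum_le_suminf[OF s]) auto
  obtain k :: nat where k: "120 * Y < real k"
    using reals_Archimedean2 by blast
  have "real k / 120 \<le> Y"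
    by (rule order_trans[OF tree_sum_unbounded bounded])
  with k show False by linarith
qed

lemma abs_rho_le: "\<bar>rho\<bar> \<le> 5/12"
proof -
  let ?c = "conv_radius (\<lambda>n. (of_nat (ycount n) :: complex))"
  have "0 \<le> ?c" "?c \<le> ereal (5/12)"
    by (rule conv_radius_nonneg, rule conv_radius_ycount_le)
  then obtain c where "?c = ereal c" "0 \<le> c" "c \<le> 5/12"
    by (cases ?c) auto
  then show ?thesis unfolding rho_def by simp
qed

lemma norm_ygf_le:
  assumes z: "cmod z \<le> 2/9"
  shows "cmod (ygf z) \<le> 3/2 * cmod z"
proof -
  let ?a = "\<lambda>n. of_nat (ycount n) * z ^ n"
  have partial_atMost: "(\<Sum>n\<le>N. norm (?a n)) \<le> 3/2 * cmod z" for N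
    using tree_sum_le[of "cmod z" N] z by (simp add: tree_sum_eq norm_mult norm_power)
  then have partial: "(\<Sum>n<N. norm (?a n)) \<le> 3/2 * cmod z" for N
    by (cases N) (simp_all add: lessThan_Suc_atMost)
  have summable: "summable (\<lambda>n. norm (?a n))"
    by (rule bounded_imp_summable[OF _ partial_atMost]) simp
  have "cmod (ygf z) \<le> (\<Sum>n. norm (?a n))"
    unfolding ygf_def by (rule summable_norm[OF summable])
  also have "\<dots> \<le> 3/2 * cmod z"
    by (rule suminf_le_const[OF summable partial])
  finally show ?thesis .
qed

lemma geometric_dominated_series:
  fixes f :: "nat \<Rightarrow> 'a::banach"
  assumes f: "\<And>i. norm (f i) \<le> a * t ^ Suc i" and t: "0 \<le> t" "t < 1"
  shows "summable f" and "norm (suminf f) \<le> a * (t / (1 - t))"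
proof -
  have "(\<lambda>i. a * t * t ^ i) sums (a * t * (1 / (1 - t)))"
    using t by (intro sums_mult geometric_sums) simp
  then have geom: "(\<lambda>i. a * t ^ Suc i) sums (a * (t / (1 - t)))"
    by (simp add: mult.assoc)
  have norm_summable: "summable (\<lambda>i. norm (f i))"
    by (rule summable_comparison_test[OF _ geom[THEN sums_summable]]) (use f in auto)
  then show "summable f"
    by (rule summable_norm_cancel)
  have "norm (suminf f) \<le> (\<Sum>i. norm (f i))"
    by (rule summable_norm[OF norm_summable])
  also have "\<dots> \<le> (\<Sum>i. a * t ^ Suc i)"
    by (rule suminf_le[OF f norm_summable geom[THEN sums_summable]])
  also have "\<dots> = a * (t / (1 - t))"
    using geom by (simp add: sums_iff)
  finally show "norm (suminf f) \<le> a * (t / (1 - t))" .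
qed

lemma has_field_derivative_series_ball:
  fixes f f' :: "nat \<Rightarrow> 'a::{real_normed_field, banach} \<Rightarrow> 'a"
  assumes "0 < \<delta>"
    and "\<And>i w. w \<in> ball v \<delta> \<Longrightarrow> (f i has_field_derivative f' i w) (at w)"
    and "\<And>i w. w \<in> ball v \<delta> \<Longrightarrow> norm (f' i w) \<le> M i" and "summable M"
    and "summable (\<lambda>i. f i v)"
  shows "((\<lambda>w. \<Sum>i. f i w) has_field_derivative (\<Sum>i. f' i v)) (at v)"
proof (rule has_field_derivative_series'(2)[OF convex_ball])
  show "(f i has_field_derivative f' i w) (at w within ball v \<delta>)" if "w \<in> ball v \<delta>" for i w
    using assms(2)[OF that] by (rule has_field_derivative_at_within)
  show "uniformly_convergent_on (ball v \<delta>) (\<lambda>n w. \<Sum>i<n. f' i w)"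
    using assms(3,4) by (rule Weierstrass_m_test')
qed (use assms in auto)

definition scale :: "complex \<Rightarrow> complex \<Rightarrow> real" where
  "scale z v = cmod z * max 1 (cmod v)"

lemma max_1_power:
  fixes a :: real
  assumes "0 \<le> a"
  shows "max 1 (a ^ n) = max 1 a ^ n"
proof (cases "a \<le> 1")
  case True
  then have "a ^ n \<le> 1" using assms by (simp add: power_le_one)
  with True show ?thesis by simp
next
  case False
  then have "1 \<le> a ^ n" by simp
  with False show ?thesis by simp
qed

lemma scale_power: "scale (z ^ n) (v ^ n) = scale z v ^ n"
  by (simp add: scale_def max_1_power norm_power power_mult_distrib)

lemma scale_nonneg: "0 \<le> scale z v"
  by (simp add: scale_def)

lemma norm_le_scale: "cmod z \<le> scale z v"
  unfolding scale_def by (simp add: mult_le_cancel_left1)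

lemma continuous_scale: "continuous_on UNIV (scale z)"
  unfolding scale_def by (intro continuous_intros)

text \<open>The candidate for \<open>\<partial>\<^sub>v Yk k z v\<close>, obtained by differentiating the recursion termwise.\<close>
fun dYk :: "nat \<Rightarrow> complex \<Rightarrow> complex \<Rightarrow> complex" where
  "dYk 0 z v = ygf z"
| "dYk (Suc k) z v = Yk (Suc k) z v * (\<Sum>i. dYk k (z ^ Suc i) (v ^ Suc i) * v ^ i)"

text \<open>The weight \<open>max 1 |v|\<close> on the derivative absorbs the factor \<open>v\<^sup>i\<close> of the chain rule, since
  \<open>|v|\<^sup>i max 1 |v| \<le> max 1 |v\<^sup>i\<^sup>+\<^sup>1|\<close>. The ratio is \<open>18/41 = 2r/(1 - r)\<close> for the radius \<open>r = 9/50\<close>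
  on \<open>scale\<close> within which the bounds are proved.\<close>
definition Yk_bounds :: "nat \<Rightarrow> complex \<Rightarrow> complex \<Rightarrow> bool" where
  "Yk_bounds k z v \<longleftrightarrow> ((\<lambda>w. Yk k z w) has_field_derivative dYk k z v) (at v)
     \<and> cmod (Yk k z v) \<le> 2 * scale z v
     \<and> cmod (dYk k z v) * max 1 (cmod v) \<le> 3/2 * (18/41) ^ k * scale z v"

lemma Yk_bounds_0:
  assumes "scale z v \<le> 2/9"
  shows "Yk_bounds 0 z v"
proof -
  have y: "cmod (ygf z) \<le> 3/2 * cmod z"
    using assms norm_le_scale[of z v] by (intro norm_ygf_le) linarith
  have "cmod (Yk 0 z v) = cmod v * cmod (ygf z)"
    by (simp add: norm_mult)
  also have "\<dots> \<le> max 1 (cmod v) * (3/2 * cmod z)"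
    using y by (intro mult_mono) auto
  also have "\<dots> \<le> 2 * scale z v"
    by (simp add: scale_def)
  finally have "cmod (Yk 0 z v) \<le> 2 * scale z v" .
  moreover have "cmod (dYk 0 z v) * max 1 (cmod v) \<le> 3/2 * cmod z * max 1 (cmod v)"
    using y by (intro mult_right_mono) auto
  moreover have "((\<lambda>w. Yk 0 z w) has_field_derivative dYk 0 z v) (at v)"
    by (auto intro!: derivative_eq_intros)
  ultimately show ?thesis
    by (simp add: Yk_bounds_def scale_def mult.assoc)
qed

lemma Yk_summand_bounds:
  assumes IH: "\<And>z v. scale z v < 9/50 \<Longrightarrow> Yk_bounds k z v" and w: "scale z w < 9/50"
  shows "((\<lambda>w. Yk k (z ^ Suc i) (w ^ Suc i) / of_nat (Suc i)) has_field_derivative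
            dYk k (z ^ Suc i) (w ^ Suc i) * w ^ i) (at w)"
    and "norm (Yk k (z ^ Suc i) (w ^ Suc i) / of_nat (Suc i)) \<le> 2 * scale z w ^ Suc i"
    and "norm (dYk k (z ^ Suc i) (w ^ Suc i) * w ^ i) * max 1 (cmod w)
           \<le> 3/2 * (18/41) ^ k * scale z w ^ Suc i"
proof -
  have "scale z w ^ Suc i \<le> scale z w"
    using power_decreasing[of 1 "Suc i" "scale z w"] w scale_nonneg[of z w] by simp
  with w have "scale (z ^ Suc i) (w ^ Suc i) < 9/50"
    unfolding scale_power by linarith
  then have "Yk_bounds k (z ^ Suc i) (w ^ Suc i)"
    by (rule IH)
  then have der: "((\<lambda>u. Yk k (z ^ Suc i) u) has_field_derivative dYk k (z ^ Suc i) (w ^ Suc i))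
                    (at (w ^ Suc i))"
    and Y: "cmod (Yk k (z ^ Suc i) (w ^ Suc i)) \<le> 2 * scale z w ^ Suc i"
    and dY: "cmod (dYk k (z ^ Suc i) (w ^ Suc i)) * max 1 (cmod w) ^ Suc i
               \<le> 3/2 * (18/41) ^ k * scale z w ^ Suc i"
    by (simp_all only: Yk_bounds_def scale_power norm_power max_1_power[OF norm_ge_zero])
  have "((\<lambda>w. Yk k (z ^ Suc i) (w ^ Suc i)) has_field_derivative
          dYk k (z ^ Suc i) (w ^ Suc i) * (of_nat (Suc i) * w ^ i)) (at w)"
    using DERIV_chain2[OF der DERIV_power[OF DERIV_ident, of "Suc i" w UNIV]] by simp
  from DERIV_cdivide[OF this, of "of_nat (Suc i)"]
  show "((\<lambda>w. Yk k (z ^ Suc i) (w ^ Suc i) / of_nat (Suc i)) has_field_derivative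
            dYk k (z ^ Suc i) (w ^ Suc i) * w ^ i) (at w)"
    by (simp del: of_nat_Suc)
  have "norm (Yk k (z ^ Suc i) (w ^ Suc i) / of_nat (Suc i)) \<le> cmod (Yk k (z ^ Suc i) (w ^ Suc i))"
    by (simp add: norm_divide divide_le_eq mult_le_cancel_left1 del: of_nat_Suc)
  with Y show "norm (Yk k (z ^ Suc i) (w ^ Suc i) / of_nat (Suc i)) \<le> 2 * scale z w ^ Suc i"
    by linarith
  have "cmod w ^ i * max 1 (cmod w) \<le> max 1 (cmod w) ^ Suc i"
    using power_mono[of "cmod w" "max 1 (cmod w)" i]
    by (simp add: mult_right_mono mult.commute)
  then have "norm (dYk k (z ^ Suc i) (w ^ Suc i) * w ^ i) * max 1 (cmod w)
        \<le> cmod (dYk k (z ^ Suc i) (w ^ Suc i)) * max 1 (cmod w) ^ Suc i"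
    unfolding norm_mult norm_power mult.assoc by (rule mult_left_mono) simp
  with dY show "norm (dYk k (z ^ Suc i) (w ^ Suc i) * w ^ i) * max 1 (cmod w)
           \<le> 3/2 * (18/41) ^ k * scale z w ^ Suc i"
    by linarith
qed

lemma Yk_log_series_bounds:
  assumes IH: "\<And>z v. scale z v < 9/50 \<Longrightarrow> Yk_bounds k z v" and v: "scale z v < 9/50"
  shows "cmod (\<Sum>i. Yk k (z ^ Suc i) (v ^ Suc i) / of_nat (Suc i)) \<le> 2 * (scale z v / (1 - scale z v))"
    and "cmod (\<Sum>i. dYk k (z ^ Suc i) (v ^ Suc i) * v ^ i) * max 1 (cmod v)
           \<le> 3/2 * (18/41) ^ k * (scale z v / (1 - scale z v))"
proof -
  define t where "t = scale z v"
  define B where "B = 3/2 * (18/41::real) ^ k"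
  define m where "m = max 1 (cmod v)"
  let ?f' = "\<lambda>i. dYk k (z ^ Suc i) (v ^ Suc i) * v ^ i"
  have t: "0 \<le> t" "t < 1"
    using v scale_nonneg[of z v] by (auto simp: t_def)
  have m: "1 \<le> m"
    by (simp add: m_def)
  show "cmod (\<Sum>i. Yk k (z ^ Suc i) (v ^ Suc i) / of_nat (Suc i)) \<le> 2 * (scale z v / (1 - scale z v))"
    unfolding t_def[symmetric]
    by (rule geometric_dominated_series(2)[OF _ t]) (use Yk_summand_bounds(2)[OF IH v] in \<open>simp add: t_def\<close>)
  have "norm (?f' i) * m \<le> B * t ^ Suc i" for i
    using Yk_summand_bounds(3)[OF IH v] by (simp add: t_def B_def m_def)
  then have "norm (?f' i) \<le> B / m * t ^ Suc i" for i
    using m by (simp add: field_simps)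
  then have "cmod (\<Sum>i. ?f' i) \<le> B / m * (t / (1 - t))"
    by (rule geometric_dominated_series(2)[OF _ t])
  then have "cmod (\<Sum>i. ?f' i) * m \<le> B / m * (t / (1 - t)) * m"
    by (rule mult_right_mono) (use m in simp)
  also have "\<dots> = B * (t / (1 - t))"
    using m by simp
  finally show "cmod (\<Sum>i. ?f' i) * max 1 (cmod v) \<le> 3/2 * (18/41) ^ k * (scale z v / (1 - scale z v))"
    by (simp only: B_def m_def t_def)
qed

lemma Yk_log_series_has_field_derivative:
  assumes IH: "\<And>z v. scale z v < 9/50 \<Longrightarrow> Yk_bounds k z v" and v: "scale z v < 9/50"
  shows "((\<lambda>w. \<Sum>i. Yk k (z ^ Suc i) (w ^ Suc i) / of_nat (Suc i)) has_field_derivative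
            (\<Sum>i. dYk k (z ^ Suc i) (v ^ Suc i) * v ^ i)) (at v)"
proof -
  define r where "r = (scale z v + 9/50) / 2"
  define B where "B = 3/2 * (18/41::real) ^ k"
  let ?f = "\<lambda>i w. Yk k (z ^ Suc i) (w ^ Suc i) / of_nat (Suc i)"
  let ?f' = "\<lambda>i w. dYk k (z ^ Suc i) (w ^ Suc i) * w ^ i"
  have r: "scale z v < r" "0 \<le> r" "r < 9/50"
    using v scale_nonneg[of z v] by (auto simp: r_def)
  have B: "0 \<le> B"
    by (simp add: B_def)
  have "open {w. scale z w < r}"
    by (intro open_Collect_less continuous_scale continuous_on_const)
  then obtain \<delta> where \<delta>: "0 < \<delta>" "ball v \<delta> \<subseteq> {w. scale z w < r}"
    using r by (auto elim!: openE)
  show ?thesis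
  proof (rule has_field_derivative_series_ball[OF \<delta>(1)])
    fix i w assume "w \<in> ball v \<delta>"
    then have w: "scale z w < 9/50" "scale z w \<le> r" using \<delta>(2) r by auto
    show "(?f i has_field_derivative ?f' i w) (at w)"
      by (rule Yk_summand_bounds(1)[OF IH w(1)])
    have "norm (?f' i w) \<le> norm (?f' i w) * max 1 (cmod w)"
      by (simp add: mult_le_cancel_left1)
    also have "\<dots> \<le> B * scale z w ^ Suc i"
      unfolding B_def by (rule Yk_summand_bounds(3)[OF IH w(1)])
    also have "\<dots> \<le> B * r ^ Suc i"
      using w B by (intro mult_left_mono power_mono scale_nonneg)
    finally show "norm (?f' i w) \<le> B * r ^ Suc i" .
  next
    show "summable (\<lambda>i. B * r ^ Suc i)"
      using r by (intro summable_mult summable_geometric) auto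
    show "summable (\<lambda>i. ?f i v)"
      using v scale_nonneg[of z v]
      by (intro geometric_dominated_series(1)[OF Yk_summand_bounds(2)[OF IH v]]) auto
  qed
qed

lemma Yk_bounds_Suc:
  assumes IH: "\<And>z v. scale z v < 9/50 \<Longrightarrow> Yk_bounds k z v" and v: "scale z v < 9/50"
  shows "Yk_bounds (Suc k) z v"
proof -
  define t where "t = scale z v"
  let ?S = "\<lambda>w. \<Sum>i. Yk k (z ^ Suc i) (w ^ Suc i) / of_nat (Suc i)"
  let ?D = "\<Sum>i. dYk k (z ^ Suc i) (v ^ Suc i) * v ^ i"
  note bounds = Yk_log_series_bounds[OF IH v, folded t_def]
  have ratio: "2 * (t / (1 - t)) \<le> 18/41"
    using v scale_nonneg[of z v] by (simp add: t_def field_simps)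
  have "cmod (?S v) \<le> 1/2"
    using bounds(1) ratio by linarith
  from exp_bound_lemma[OF this] have exp_le: "cmod (exp (?S v)) \<le> 2"
    using bounds(1) ratio by linarith
  have "cmod (z * exp (?S v)) \<le> t * 2"
    unfolding norm_mult by (rule mult_mono[OF _ exp_le]) (simp_all add: t_def norm_le_scale scale_nonneg)
  then have Y: "cmod (z * exp (?S v)) \<le> 2 * t"
    by simp
  have "cmod (z * exp (?S v) * ?D) * max 1 (cmod v)
        = cmod (z * exp (?S v)) * (cmod ?D * max 1 (cmod v))"
    by (simp add: norm_mult mult.assoc)
  also have "\<dots> \<le> (2 * t) * (3/2 * (18/41) ^ k * (t / (1 - t)))"
    by (rule mult_mono[OF Y bounds(2)]) (simp_all add: t_def scale_nonneg)
  also have "\<dots> = 3/2 * (18/41) ^ k * t * (2 * (t / (1 - t)))"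
    by (simp add: algebra_simps)
  also have "\<dots> \<le> 3/2 * (18/41) ^ k * t * (18/41)"
    by (rule mult_left_mono[OF ratio]) (simp add: t_def scale_nonneg)
  finally have dY: "cmod (z * exp (?S v) * ?D) * max 1 (cmod v) \<le> 3/2 * (18/41) ^ Suc k * t"
    by (simp add: mult_ac)
  have "((\<lambda>w. z * exp (?S w)) has_field_derivative z * exp (?S v) * ?D) (at v)"
    using Yk_log_series_has_field_derivative[OF IH v] by (auto intro!: derivative_eq_intros)
  moreover have "Yk (Suc k) z = (\<lambda>w. z * exp (?S w))" and "dYk (Suc k) z v = z * exp (?S v) * ?D"
    by (simp_all add: fun_eq_iff)
  ultimately show ?thesis
    unfolding Yk_bounds_def t_def[symmetric] using Y dY by simp
qed

lemma Yk_bounds: "scale z v < 9/50 \<Longrightarrow> Yk_bounds k z v"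
proof (induction k arbitrary: z v)
  case 0
  then show ?case by (intro Yk_bounds_0) simp
next
  case (Suc k)
  then show ?case by (rule Yk_bounds_Suc)
qed

lemma norm_gammak_power_le:
  assumes x: "cmod x \<le> 21/50" and u: "cmod u \<le> 1" and n: "2 \<le> n"
  shows "cmod (gammak k (x ^ n) (u ^ n)) \<le> 3/2 * (18/41) ^ k * cmod x ^ n"
proof -
  have "max 1 (cmod (u ^ n)) = 1"
    using u power_le_one[of "cmod u" n] by (simp add: norm_power)
  then have scale: "scale (x ^ n) (u ^ n) = cmod x ^ n"
    by (simp add: scale_def norm_power)
  have "cmod x ^ n \<le> cmod x ^ 2"
    using x n by (intro power_decreasing) auto
  also have "\<dots> \<le> (21/50) ^ 2"
    using x by (intro power_mono) auto
  finally have "scale (x ^ n) (u ^ n) < 9/50"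
    by (simp add: scale power2_eq_square)
  then have bounds: "Yk_bounds k (x ^ n) (u ^ n)"
    by (rule Yk_bounds)
  then have "gammak k (x ^ n) (u ^ n) = dYk k (x ^ n) (u ^ n)"
    unfolding gammak_def Yk_bounds_def by (blast intro: DERIV_imp_deriv)
  with bounds \<open>max 1 (cmod (u ^ n)) = 1\<close> show ?thesis
    by (simp add: Yk_bounds_def scale)
qed

lemma gammak_tail_bound:
  assumes x: "cmod x \<le> 21/50" and u: "cmod u \<le> 1"
  shows "summable (\<lambda>i. gammak k (x ^ (i + 2)) (u ^ (i + 2)))"
    and "cmod (\<Sum>i. gammak k (x ^ (i + 2)) (u ^ (i + 2))) \<le> 3/2 * (18/41) ^ k"
proof -
  define c where "c = 3/2 * (18/41::real) ^ k"
  have x1: "0 \<le> cmod x" "cmod x < 1" using x by auto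
  have terms: "norm (gammak k (x ^ (i + 2)) (u ^ (i + 2))) \<le> c * cmod x * cmod x ^ Suc i" for i
    using norm_gammak_power_le[OF x u, of "i + 2" k] by (simp add: c_def mult_ac)
  show "summable (\<lambda>i. gammak k (x ^ (i + 2)) (u ^ (i + 2)))"
    by (rule geometric_dominated_series(1)[OF terms x1])
  have "cmod x * cmod x \<le> 1 - cmod x"
    using x mult_mono[OF x x] by simp
  then have "cmod x * (cmod x / (1 - cmod x)) \<le> 1"
    using x1 by (simp add: field_simps)
  then have "c * (cmod x * (cmod x / (1 - cmod x))) \<le> c * 1"
    by (rule mult_left_mono) (simp add: c_def)
  then have "c * cmod x * (cmod x / (1 - cmod x)) \<le> c"
    by (simp only: mult.assoc mult_1_right)
  with geometric_dominated_series(2)[OF terms x1]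
  show "cmod (\<Sum>i. gammak k (x ^ (i + 2)) (u ^ (i + 2))) \<le> 3/2 * (18/41) ^ k"
    unfolding c_def by (rule order_trans)
qed

lemma norm_le_in_Delta:
  assumes "\<epsilon> \<le> 1/300" and "x \<in> Delta \<epsilon> \<theta>"
  shows "cmod x \<le> 21/50"
proof -
  have "cmod x \<le> cmod (complex_of_real rho) + cmod (x - complex_of_real rho)"
    using norm_triangle_ineq[of "complex_of_real rho" "x - complex_of_real rho"] by simp
  then show ?thesis
    using assms abs_rho_le by (simp add: Delta_def)
qed

theorem mainTheorem11:
  fixes \<theta> \<eta> :: real
  assumes "0 < \<theta>" "\<theta> < pi / 2" "0 < \<eta>"
  shows "\<exists>\<epsilon>0>0. \<forall>\<epsilon>. 0 < \<epsilon> \<and> \<epsilon> < \<epsilon>0 \<longrightarrow>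
           (\<exists>L C. 0 < L \<and> L < 1 \<and> (\<exists>K. \<forall>k\<ge>K. \<forall>u\<in>Xi \<eta> k. \<forall>x\<in>Delta \<epsilon> \<theta>.
              summable (\<lambda>i. gammak k (x ^ (i + 2)) (u ^ (i + 2))) \<and>
              cmod (\<Sum>i. gammak k (x ^ (i + 2)) (u ^ (i + 2))) \<le> C * L ^ k))"
proof (rule exI[of _ "1/300"], intro conjI allI impI)
  fix \<epsilon> :: real
  assume \<epsilon>: "0 < \<epsilon> \<and> \<epsilon> < 1/300"
  show "\<exists>L C. 0 < L \<and> L < 1 \<and> (\<exists>K. \<forall>k\<ge>K. \<forall>u\<in>Xi \<eta> k. \<forall>x\<in>Delta \<epsilon> \<theta>.
          summable (\<lambda>i. gammak k (x ^ (i + 2)) (u ^ (i + 2))) \<and>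
          cmod (\<Sum>i. gammak k (x ^ (i + 2)) (u ^ (i + 2))) \<le> C * L ^ k)"
  proof (rule exI[of _ "18/41"], rule exI[of _ "3/2"], intro conjI exI[of _ 0] allI impI ballI)
    fix k u x
    assume u: "u \<in> Xi \<eta> k" and x: "x \<in> Delta \<epsilon> \<theta>"
    have "cmod x \<le> 21/50"
      using \<epsilon> x by (intro norm_le_in_Delta) auto
    moreover have "cmod u \<le> 1"
      using u by (simp add: Xi_def)
    ultimately show "summable (\<lambda>i. gammak k (x ^ (i + 2)) (u ^ (i + 2)))"
      and "cmod (\<Sum>i. gammak k (x ^ (i + 2)) (u ^ (i + 2))) \<le> 3/2 * (18/41) ^ k"
      by (rule gammak_tail_bound)+
  qed simp_all
qed simp

end
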